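(* Let $\mathcal N$ be a feed-forward ReLU network with input dimension $n_{\mathrm{in}}$ whose parameter vector $\theta$ is random with a distribution absolutely continuous with respect to Lebesgue measure, let $\mathcal C\subset\mathbb R^{n_{\mathrm{in}}}$ be a closed cube, and let $r\in\{0,\dots,n_{\mathrm{in}}\}$. With probability $1$, for every $k\in\{0,\dots,n_{\mathrm{in}}\}$ the set $\mathcal V_k(\theta)$ consists of isolated points, and $$\#\{r\text{-partial activation regions }\mathcal R(\mathcal A;\theta)\text{ with }\mathcal R(\mathcal A;\theta)\cap\mathcal C\neq\emptyset\}\le\sum_{k=r}^{n_{\mathrm{in}}}\binom{k}{r}2^{k-r}\,\#\mathcal V_k(\theta).$$
   Context: A feed-forward ReLU network $\mathcal N$ with input dimension $n_{\mathrm{in}}$ has hidden layers $1,\dots,d$; edges only between consecutive layers (arbitrary connectivity, no tied weights). A neuron $z$ in layer $1$ has pre-activation $z(x;\theta)=\sum_i w_{z,i}x_i$; a neuron $z$ in layer $\ell\ge2$ has pre-activation $z(x;\theta)=\sum_{z'}w_{z,z'}\max\{0,z'(x;\theta)-b_{z'}\}$ over neurons $z'$ of layer $\ell-1$ joined to $z$; $b_z$ is its bias. $\theta$ is the vector of all weights and biases. Let $\mathrm{sgn}(t)=1,0,-1$ for $t>0,t=0,t<0$. An $r$-partial activation pattern is $\mathcal A=\{a_z\}\in\{-1,0,1\}^{\#\mathrm{neurons}}$ with exactly $r$ neurons having $a_z=0$; its $r$-partial activation region is $\mathcal R(\mathcal A;\theta)=\{x:\ \mathrm{sgn}(z(x;\theta)-b_z)=a_z\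 \forall z\}$. $H_z(\theta)=\{x:z(x;\theta)=b_z\}$; $X_{\mathcal N,k}(\theta)$ is the set of $x$ for which there are exactly $k$ neurons $z$ with $x\in H_z(\theta)$. $\mathcal C_k$ is the $k$-dimensional skeleton of $\mathcal C$, i.e. the union of its $k$-dimensional faces ($\mathcal C_0$ = the vertices, $\mathcal C_{n_{\mathrm{in}}}=\mathcal C$). $\mathcal V_k(\theta)=X_{\mathcal N,k}(\theta)\cap\mathcal C_k$, and $\#\mathcal V_k$ is its cardinality. *)

theory Defs
  imports "HOL-Probability.Probability"
begin

datatype ('a, 'n) param = WIn 'a 'n | W 'a 'a | B 'a

definition arch_ok :: "('a \<Rightarrow> nat) \<Rightarrow> ('a \<Rightarrow> 'a \<Rightarrow> bool) \<Rightarrow> bool" where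
  "arch_ok layer E \<longleftrightarrow> (\<forall>z. 1 \<le> layer z) \<and> (\<forall>z' z. E z' z \<longrightarrow> layer z = Suc (layer z'))"

definition params :: "('a \<Rightarrow> nat) \<Rightarrow> ('a \<Rightarrow> 'a \<Rightarrow> bool) \<Rightarrow> ('a, 'n) param set" where
  "params layer E = {WIn z i | z i. layer z = 1} \<union> {W z z' | z z'. E z' z} \<union> range B"

fun pa :: "nat \<Rightarrow> ('a::finite \<Rightarrow> 'a \<Rightarrow> bool) \<Rightarrow> (('a, 'n::finite) param \<Rightarrow> real)
           \<Rightarrow> 'a \<Rightarrow> real^'n \<Rightarrow> real" where
  "pa 0 E \<theta> z x = (\<Sum>i\<in>UNIV. \<theta> (WIn z i) * x $ i)"
| "pa (Suc k) E \<theta> z x =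
     (\<Sum>z'\<in>{z'. E z' z}. \<theta> (W z z') * max 0 (pa k E \<theta> z' x - \<theta> (B z')))"

definition preact :: "('a::finite \<Rightarrow> nat) \<Rightarrow> ('a \<Rightarrow> 'a \<Rightarrow> bool) \<Rightarrow> (('a, 'n::finite) param \<Rightarrow> real)
           \<Rightarrow> 'a \<Rightarrow> real^'n \<Rightarrow> real" where
  "preact layer E \<theta> z x = pa (layer z - 1) E \<theta> z x"

definition partial_pattern :: "nat \<Rightarrow> ('a::finite \<Rightarrow> real) \<Rightarrow> bool" where
  "partial_pattern r A \<longleftrightarrow> (\<forall>z. A z \<in> {-1, 0, 1}) \<and> card {z. A z = 0} = r"

definition region :: "('a::finite \<Rightarrow> nat) \<Rightarrow> ('a \<Rightarrow> 'a \<Rightarrow> bool) \<Rightarrow> ('a \<Rightarrow> real)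
           \<Rightarrow> (('a, 'n::finite) param \<Rightarrow> real) \<Rightarrow> (real^'n) set" where
  "region layer E A \<theta> = {x. \<forall>z. sgn (preact layer E \<theta> z x - \<theta> (B z)) = A z}"

definition Xset :: "('a::finite \<Rightarrow> nat) \<Rightarrow> ('a \<Rightarrow> 'a \<Rightarrow> bool)
           \<Rightarrow> (('a, 'n::finite) param \<Rightarrow> real) \<Rightarrow> nat \<Rightarrow> (real^'n) set" where
  "Xset layer E \<theta> k = {x. card {z. preact layer E \<theta> z x = \<theta> (B z)} = k}"

definition cube :: "real^'n \<Rightarrow> real \<Rightarrow> (real^'n) set" where
  "cube a s = {x. \<forall>i. a $ i \<le> x $ i \<and> x $ i \<le> a $ i + s}"

definition cube_face :: "real^'n \<Rightarrow> real \<Rightarrow> 'n set \<Rightarrow> ('n \<Rightarrow> bool) \<Rightarrow> (real^'n) set" where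
  "cube_face a s S up = {x \<in> cube a s. \<forall>i\<in>S. x $ i = (if up i then a $ i + s else a $ i)}"

definition skeleton :: "real^'n::finite \<Rightarrow> real \<Rightarrow> nat \<Rightarrow> (real^'n) set" where
  "skeleton a s k = (\<Union>{cube_face a s S up | S up. card S + k = CARD('n)})"

definition ecard :: "'b set \<Rightarrow> enat" where
  "ecard X = (if finite X then enat (card X) else \<infinity>)"

end

theory Submission
  imports Defs
begin

text \<open>Call theta generic if every nonempty flat cut out by the threshold hyperplanes of the affine
  pieces of some neurons and by some facets of the cube has the expected codimension. This holds
  almost surely: the bias of a neuron of top layer is a free coordinate on which neither the
  network below it nor its own affine piece depends.
  For generic theta, the closure of a region meeting the cube is compact and convex and so has an
  extreme point v. No direction along the flat of the neurons vanishing at v and the facets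
  through v stays inside the closure both ways, so this flat is the point v, and genericity makes v
  a point of V_k, k being the number of neurons vanishing at v. A pattern with r zeros is determined
  by v, its zero set (an r-subset of these k neurons) and its positive neurons among the other
  k - r, whence the bound.\<close>

section \<open>Networks with a frozen activation pattern\<close>

fun lin_pa :: "nat \<Rightarrow> ('a::finite \<Rightarrow> 'a \<Rightarrow> bool) \<Rightarrow> 'a set \<Rightarrow> (('a, 'n::finite) param \<Rightarrow> real)
    \<Rightarrow> 'a \<Rightarrow> real^'n \<Rightarrow> real" where
  "lin_pa 0 E P \<theta> z x = pa 0 E \<theta> z x"
| "lin_pa (Suc k) E P \<theta> z x =
     (\<Sum>z'\<in>{z'. E z' z}. if z' \<in> P then \<theta> (W z z') * (lin_pa k E P \<theta> z' x - \<theta> (B z')) else 0)"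

fun lin_coeff :: "nat \<Rightarrow> ('a::finite \<Rightarrow> 'a \<Rightarrow> bool) \<Rightarrow> 'a set \<Rightarrow> (('a, 'n::finite) param \<Rightarrow> real)
    \<Rightarrow> 'a \<Rightarrow> real^'n" where
  "lin_coeff 0 E P \<theta> z = (\<chi> i. \<theta> (WIn z i))"
| "lin_coeff (Suc k) E P \<theta> z =
     (\<Sum>z'\<in>{z'. E z' z}. if z' \<in> P then \<theta> (W z z') *\<^sub>R lin_coeff k E P \<theta> z' else 0)"

lemma lin_pa_affine: "lin_pa k E P \<theta> z x = lin_coeff k E P \<theta> z \<bullet> x + lin_pa k E P \<theta> z 0"
proof (induction k arbitrary: z)
  case 0
  show ?case by (simp add: inner_vec_def)
next
  case (Suc k)
  show ?case
    by (subst (1 2) lin_pa.simps, subst Suc)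
       (simp add: inner_sum_left sum.distrib[symmetric] if_distrib algebra_simps cong: if_cong)
qed

lemma pa_eq_lin_pa:
  assumes arch: "arch_ok layer E" and "layer z = Suc k"
    and consistent: "\<And>z'. pa (layer z' - 1) E \<theta> z' x = lin_pa (layer z' - 1) E P \<theta> z' x \<Longrightarrow>
      z' \<in> P \<longleftrightarrow> \<theta> (B z') < lin_pa (layer z' - 1) E P \<theta> z' x"
  shows "pa k E \<theta> z x = lin_pa k E P \<theta> z x"
  using \<open>layer z = Suc k\<close>
proof (induction k arbitrary: z)
  case 0
  then show ?case by simp
next
  case (Suc k)
  have "\<theta> (W z z') * max 0 (pa k E \<theta> z' x - \<theta> (B z')) =
      (if z' \<in> P then \<theta> (W z z') * (lin_pa k E P \<theta> z' x - \<theta> (B z')) else 0)" if "E z' z" for z'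
  proof -
    have "layer z' = Suc k" using arch that Suc.prems by (simp add: arch_ok_def)
    with Suc.IH consistent[of z'] show ?thesis by auto
  qed
  then show ?case by (auto intro: sum.cong)
qed

definition lin_preact :: "('a::finite \<Rightarrow> nat) \<Rightarrow> ('a \<Rightarrow> 'a \<Rightarrow> bool) \<Rightarrow> 'a set
    \<Rightarrow> (('a, 'n::finite) param \<Rightarrow> real) \<Rightarrow> 'a \<Rightarrow> real^'n \<Rightarrow> real" where
  "lin_preact layer E P \<theta> z x = lin_pa (layer z - 1) E P \<theta> z x"

definition lin_normal :: "('a::finite \<Rightarrow> nat) \<Rightarrow> ('a \<Rightarrow> 'a \<Rightarrow> bool) \<Rightarrow> 'a set
    \<Rightarrow> (('a, 'n::finite) param \<Rightarrow> real) \<Rightarrow> 'a \<Rightarrow> real^'n" where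
  "lin_normal layer E P \<theta> z = lin_coeff (layer z - 1) E P \<theta> z"

lemma lin_preact_affine:
  "lin_preact layer E P \<theta> z x = lin_normal layer E P \<theta> z \<bullet> x + lin_preact layer E P \<theta> z 0"
  unfolding lin_preact_def lin_normal_def by (rule lin_pa_affine)

lemma lin_preact_eq_iff:
  "lin_preact layer E P \<theta> z x = b \<longleftrightarrow> lin_normal layer E P \<theta> z \<bullet> x = b - lin_preact layer E P \<theta> z 0"
  using lin_preact_affine[of layer E P \<theta> z x] by linarith

lemma continuous_on_lin_preact: "continuous_on UNIV (lin_preact layer E P \<theta> z)"
  by (subst lin_preact_affine[abs_def]) (intro continuous_intros)

lemma continuous_on_preact: "continuous_on UNIV (preact layer E \<theta> z)"
proof -
  have "continuous_on UNIV (pa k E \<theta> z)" for k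
    by (induction k arbitrary: z) (auto intro!: continuous_intros)
  then show ?thesis by (simp add: preact_def[abs_def])
qed

lemma arch_ok_layer_eq_Suc: "arch_ok layer E \<Longrightarrow> layer z = Suc (layer z - 1)"
  unfolding arch_ok_def by (metis Suc_diff_le diff_Suc_1)

text \<open>The hypothesis is only required where network and model already agree, which is what an
  induction over the layers provides.\<close>
lemma preact_eq_lin_preact:
  assumes arch: "arch_ok layer E"
    and consistent: "\<And>z'. preact layer E \<theta> z' x = lin_preact layer E P \<theta> z' x \<Longrightarrow>
      z' \<in> P \<longleftrightarrow> \<theta> (B z') < lin_preact layer E P \<theta> z' x"
  shows "preact layer E \<theta> z x = lin_preact layer E P \<theta> z x"
proof -
  have "pa (layer z - 1) E \<theta> z x = lin_pa (layer z - 1) E P \<theta> z x"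
    by (rule pa_eq_lin_pa[OF arch arch_ok_layer_eq_Suc[OF arch]])
      (use consistent in \<open>simp add: preact_def lin_preact_def\<close>)
  then show ?thesis by (simp add: preact_def lin_preact_def)
qed

lemma preact_eq_lin_preact_active:
  assumes "arch_ok layer E"
  shows "preact layer E \<theta> z x = lin_preact layer E {z'. \<theta> (B z') < preact layer E \<theta> z' x} \<theta> z x"
  by (rule preact_eq_lin_preact[OF assms]) simp

definition active_set :: "('a \<Rightarrow> real) \<Rightarrow> 'a set" where
  "active_set A = {z. A z = 1}"

lemma preact_eq_lin_preact_region:
  assumes "arch_ok layer E" and "x \<in> region layer E A \<theta>"
  shows "preact layer E \<theta> z x = lin_preact layer E (active_set A) \<theta> z x"
proof -
  have "active_set A = {z'. \<theta> (B z') < preact layer E \<theta> z' x}"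
    using assms(2) by (auto simp: region_def active_set_def sgn_real_def split: if_splits)
  then show ?thesis using preact_eq_lin_preact_active[OF assms(1)] by simp
qed

lemma region_eq_lin:
  assumes arch: "arch_ok layer E"
  shows "region layer E A \<theta> = {x. \<forall>z. sgn (lin_preact layer E (active_set A) \<theta> z x - \<theta> (B z)) = A z}"
proof (intro set_eqI iffI)
  fix x assume x: "x \<in> region layer E A \<theta>"
  then have "preact layer E \<theta> z x = lin_preact layer E (active_set A) \<theta> z x" for z
    by (rule preact_eq_lin_preact_region[OF arch])
  with x show "x \<in> {x. \<forall>z. sgn (lin_preact layer E (active_set A) \<theta> z x - \<theta> (B z)) = A z}"
    by (simp add: region_def)
next
  fix x assume x: "x \<in> {x. \<forall>z. sgn (lin_preact layer E (active_set A) \<theta> z x - \<theta> (B z)) = A z}"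
  have "preact layer E \<theta> z x = lin_preact layer E (active_set A) \<theta> z x" for z
  proof (rule preact_eq_lin_preact[OF arch])
    fix z'
    show "z' \<in> active_set A \<longleftrightarrow> \<theta> (B z') < lin_preact layer E (active_set A) \<theta> z' x"
      using x by (auto simp: active_set_def sgn_real_def split: if_splits)
  qed
  with x show "x \<in> region layer E A \<theta>" by (simp add: region_def)
qed

lemma convex_sgn_eq:
  fixes a :: "'a::real_inner"
  shows "convex {x. sgn (a \<bullet> x - b) = (c::real)}"
proof -
  consider "c = 1" | "c = -1" | "c = 0" | "c \<notin> {-1, 0, 1}" by blast
  then show ?thesis
  proof cases
    case 1
    then have "{x. sgn (a \<bullet> x - b) = c} = {x. a \<bullet> x > b}" by (auto simp: sgn_real_def)
    then show ?thesis by (simp add: convex_halfspace_gt)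
  next
    case 2
    then have "{x. sgn (a \<bullet> x - b) = c} = {x. a \<bullet> x < b}" by (auto simp: sgn_real_def)
    then show ?thesis by (simp add: convex_halfspace_lt)
  next
    case 3
    then have "{x. sgn (a \<bullet> x - b) = c} = {x. a \<bullet> x = b}" by (auto simp: sgn_real_def)
    then show ?thesis by (simp add: convex_hyperplane)
  next
    case 4
    then have "{x. sgn (a \<bullet> x - b) = c} = {}" by (auto simp: sgn_real_def)
    then show ?thesis by simp
  qed
qed

lemma convex_region:
  assumes "arch_ok layer E"
  shows "convex (region layer E A \<theta>)"
proof -
  have "region layer E A \<theta> = (\<Inter>z. {x. sgn (lin_normal layer E (active_set A) \<theta> z \<bullet> x
      - (\<theta> (B z) - lin_preact layer E (active_set A) \<theta> z 0)) = A z})"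
    unfolding region_eq_lin[OF assms] by (subst lin_preact_affine) (auto simp: algebra_simps)
  then show ?thesis by (simp add: convex_INT convex_sgn_eq)
qed

section \<open>Affine flats\<close>

lemma aff_dim_Inter_hyperplanes_ge:
  fixes Q :: "('a::euclidean_space \<times> real) set"
  assumes "finite Q" and "(\<Inter>q\<in>Q. {x. fst q \<bullet> x = snd q}) \<noteq> {}"
  shows "int DIM('a) - int (card Q) \<le> aff_dim (\<Inter>q\<in>Q. {x. fst q \<bullet> x = snd q})"
  using assms
proof (induction Q rule: finite_induct)
  case empty
  then show ?case by simp
next
  case (insert q Q)
  let ?F = "\<Inter>q\<in>Q. {x. fst q \<bullet> x = snd q}"
  have "affine ?F" by (auto simp: affine_hyperplane)
  then have "aff_dim ?F - 1 \<le> aff_dim (?F \<inter> {x. fst q \<bullet> x = snd q})"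
    using insert.prems by (subst aff_dim_affine_Int_hyperplane) (auto simp: Int_commute)
  moreover have "?F \<noteq> {}" using insert.prems by auto
  ultimately show ?case using insert by (simp add: Int_commute)
qed

lemma aff_dim_coordinate_flat_le:
  fixes S :: "'n::finite set"
  shows "aff_dim {x::real^'n. \<forall>i\<in>S. x $ i = c i} \<le> int CARD('n) - int (card S)"
  using finite[of S]
proof (induction S rule: finite_induct)
  case empty
  then show ?case by simp
next
  case (insert i S)
  let ?F = "{x::real^'n. \<forall>i\<in>S. x $ i = c i}"
  have "?F = (\<Inter>j\<in>S. {x. axis j 1 \<bullet> x = c j})" by (auto simp: inner_axis')
  then have "affine ?F" by (auto simp: affine_hyperplane)
  moreover have eq: "{x. \<forall>j\<in>insert i S. x $ j = c j} = ?F \<inter> {x. axis i 1 \<bullet> x = c i}"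
    by (auto simp: inner_axis')
  moreover have "(\<chi> j. if j = i then c i + 1 else c j) \<in> ?F - {x. axis i 1 \<bullet> x = c i}"
    using insert.hyps by (auto simp: inner_axis')
  then have "?F \<noteq> {}" and not_sub: "\<not> ?F \<subseteq> {x. axis i 1 \<bullet> x = c i}" by blast+
  then have "0 \<le> aff_dim ?F" using aff_dim_negative_iff[of ?F] by linarith
  ultimately have "aff_dim {x. \<forall>j\<in>insert i S. x $ j = c j} \<le> aff_dim ?F - 1"
    using not_sub by (simp only: aff_dim_affine_Int_hyperplane) (simp split: if_splits)
  then show ?case using insert by simp
qed

definition lin_flat :: "('a::finite \<Rightarrow> nat) \<Rightarrow> ('a \<Rightarrow> 'a \<Rightarrow> bool) \<Rightarrow> 'a set
    \<Rightarrow> (('a, 'n::finite) param \<Rightarrow> real) \<Rightarrow> 'a set \<Rightarrow> 'n set \<Rightarrow> ('n \<Rightarrow> real) \<Rightarrow> (real^'n) set" where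
  "lin_flat layer E P \<theta> T S c =
     {x. (\<forall>z\<in>T. lin_preact layer E P \<theta> z x = \<theta> (B z)) \<and> (\<forall>i\<in>S. x $ i = c i)}"

lemma lin_flat_eq_Inter_hyperplanes:
  "lin_flat layer E P \<theta> T S c = (\<Inter>q \<in> (\<lambda>z. (lin_normal layer E P \<theta> z, \<theta> (B z) - lin_preact layer E P \<theta> z 0)) ` T
      \<union> (\<lambda>i. (axis i 1, c i)) ` S. {x. fst q \<bullet> x = snd q})"
  by (auto simp: lin_flat_def lin_preact_eq_iff inner_axis' INT_Un)

lemma affine_lin_flat: "affine (lin_flat layer E P \<theta> T S c)"
  by (subst lin_flat_eq_Inter_hyperplanes) (auto simp: affine_hyperplane)

lemma aff_dim_lin_flat_ge:
  assumes "lin_flat layer E P \<theta> T (S::'n::finite set) c \<noteq> {}"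
  shows "int CARD('n) - int (card T) - int (card S) \<le> aff_dim (lin_flat layer E P \<theta> T S c)"
proof -
  let ?Q = "(\<lambda>z. (lin_normal layer E P \<theta> z, \<theta> (B z) - lin_preact layer E P \<theta> z 0)) ` T
      \<union> (\<lambda>i. (axis i 1, c i)) ` S"
  have "card ?Q \<le> card T + card S"
    by (meson card_Un_le card_image_le finite le_trans add_mono)
  moreover have "int CARD('n) - int (card ?Q) \<le> aff_dim (lin_flat layer E P \<theta> T S c)"
    using aff_dim_Inter_hyperplanes_ge[of ?Q] assms
    unfolding lin_flat_eq_Inter_hyperplanes by simp
  ultimately show ?thesis by linarith
qed

lemma lin_flat_insert:
  "lin_flat layer E P \<theta> (insert z T) S c =
     lin_flat layer E P \<theta> T S c \<inter> {x. lin_normal layer E P \<theta> z \<bullet> x = \<theta> (B z) - lin_preact layer E P \<theta> z 0}"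
  by (auto simp: lin_flat_def lin_preact_eq_iff)

section \<open>Vertices of regions inside the cube\<close>

lemma closure_sgn_eq_subset:
  fixes f :: "'a::topological_space \<Rightarrow> real"
  assumes "continuous_on UNIV f"
  shows "closure {y. sgn (f y) = c} \<subseteq> {y. sgn (f y) = c \<or> f y = 0}"
proof (rule closure_minimal)
  consider "c = 1" | "c = -1" | "c \<notin> {-1, 1}" by blast
  then show "closed {y. sgn (f y) = c \<or> f y = 0}"
  proof cases
    case 1
    then have "{y. sgn (f y) = c \<or> f y = 0} = {y. 0 \<le> f y}" by (auto simp: sgn_real_def)
    then show ?thesis using closed_Collect_le[OF continuous_on_const assms] by simp
  next
    case 2
    then have "{y. sgn (f y) = c \<or> f y = 0} = {y. f y \<le> 0}" by (auto simp: sgn_real_def)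
    then show ?thesis using closed_Collect_le[OF assms continuous_on_const] by simp
  next
    case 3
    then have "{y. sgn (f y) = c \<or> f y = 0} = {y. f y = 0}" by (auto simp: sgn_real_def)
    then show ?thesis using closed_Collect_eq[OF assms continuous_on_const] by simp
  qed
qed blast

lemma open_sgn_eq:
  fixes f :: "'a::topological_space \<Rightarrow> real"
  assumes "continuous_on UNIV f" and "c \<noteq> 0"
  shows "open {y. sgn (f y) = c}"
proof -
  consider "c = 1" | "c = -1" | "c \<notin> {-1, 1}" by blast
  then show ?thesis
  proof cases
    case 1
    then have "{y. sgn (f y) = c} = {y. 0 < f y}" by (auto simp: sgn_real_def)
    then show ?thesis using open_Collect_less[OF continuous_on_const assms(1)] by simp
  next
    case 2
    then have "{y. sgn (f y) = c} = {y. f y < 0}" by (auto simp: sgn_real_def)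
    then show ?thesis using open_Collect_less[OF assms(1) continuous_on_const] by simp
  next
    case 3
    then have "{y. sgn (f y) = c} = {}" using assms(2) by (auto simp: sgn_real_def)
    then show ?thesis by simp
  qed
qed

lemma translate_mem_closure:
  fixes v w :: "'a::real_normed_vector"
  assumes "v \<in> closure X" and "r > 0" and "(+) w ` (ball v r \<inter> X) \<subseteq> X"
  shows "v + w \<in> closure X"
proof -
  have "v \<in> closure (ball v r \<inter> X)"
    using open_Int_closure_subset[of "ball v r" X] assms(1,2) by auto
  then have "w + v \<in> closure ((+) w ` (ball v r \<inter> X))" by (simp add: closure_translation)
  then show ?thesis using closure_mono[OF assms(3)] by (auto simp: add.commute)
qed

lemma cube_eq_cbox: "cube a s = cbox a (\<chi> i. a $ i + s)"
  by (simp add: cube_def interval_cart)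

lemma closure_region_cube_subset: "closure (region layer E A \<theta> \<inter> cube a s) \<subseteq> cube a s"
  by (intro closure_minimal) (auto simp: cube_eq_cbox)

lemma preact_eq_lin_preact_closure:
  assumes arch: "arch_ok layer E" and "y \<in> closure (region layer E A \<theta> \<inter> X)"
  shows "preact layer E \<theta> z y = lin_preact layer E (active_set A) \<theta> z y"
proof -
  have "region layer E A \<theta> \<inter> X \<subseteq> {y. preact layer E \<theta> z y = lin_preact layer E (active_set A) \<theta> z y}"
    using preact_eq_lin_preact_region[OF arch] by blast
  then have "closure (region layer E A \<theta> \<inter> X) \<subseteq>
      {y. preact layer E \<theta> z y = lin_preact layer E (active_set A) \<theta> z y}"
    by (rule closure_minimal) (intro closed_Collect_eq continuous_on_preact continuous_on_lin_preact)
  with assms(2) show ?thesis by blast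
qed

lemma sgn_lin_preact_closure:
  assumes arch: "arch_ok layer E" and "y \<in> closure (region layer E A \<theta> \<inter> X)"
  defines "L \<equiv> lin_preact layer E (active_set A) \<theta>"
  shows "sgn (L z y - \<theta> (B z)) = A z \<or> L z y = \<theta> (B z)"
proof -
  have "region layer E A \<theta> \<inter> X \<subseteq> {y. sgn (L z y - \<theta> (B z)) = A z}"
    using region_eq_lin[OF arch] by (auto simp: L_def)
  then have "y \<in> closure {y. sgn (L z y - \<theta> (B z)) = A z}"
    using closure_mono assms(2) by blast
  moreover have "continuous_on UNIV (\<lambda>y. L z y - \<theta> (B z))"
    unfolding L_def by (intro continuous_intros continuous_on_lin_preact)
  ultimately show ?thesis using closure_sgn_eq_subset by fastforce
qed

lemma region_cube_translate:
  assumes arch: "arch_ok layer E" and u: "u \<in> region layer E A \<theta> \<inter> cube a s"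
    and neurons: "\<And>z. lin_normal layer E (active_set A) \<theta> z \<bullet> d = 0 \<or>
      sgn (lin_preact layer E (active_set A) \<theta> z (u + d) - \<theta> (B z)) = A z"
    and coords: "\<And>i. d $ i = 0 \<or> a $ i < (u + d) $ i \<and> (u + d) $ i < a $ i + s"
  shows "u + d \<in> region layer E A \<theta> \<inter> cube a s"
proof
  have "sgn (lin_preact layer E (active_set A) \<theta> z (u + d) - \<theta> (B z)) = A z" for z
  proof -
    have "lin_preact layer E (active_set A) \<theta> z (u + d) = lin_preact layer E (active_set A) \<theta> z u"
      if "lin_normal layer E (active_set A) \<theta> z \<bullet> d = 0"
      using that by (subst (1 2) lin_preact_affine) (simp add: inner_add_right)
    then show ?thesis using neurons[of z] u by (auto simp: region_eq_lin[OF arch])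
  qed
  then show "u + d \<in> region layer E A \<theta>" by (simp add: region_eq_lin[OF arch])
  show "u + d \<in> cube a s"
    unfolding cube_def
  proof (intro CollectI allI)
    fix i
    show "a $ i \<le> (u + d) $ i \<and> (u + d) $ i \<le> a $ i + s"
      using u coords[of i] by (auto simp: cube_def)
  qed
qed

definition face_coord :: "real^'n \<Rightarrow> real \<Rightarrow> ('n \<Rightarrow> bool) \<Rightarrow> 'n \<Rightarrow> real" where
  "face_coord a s up i = (if up i then a $ i + s else a $ i)"

lemma extreme_point_symmetric_eq_0:
  fixes v d :: "'a::real_normed_vector"
  assumes "v extreme_point_of K" and "v + d \<in> K" and "v - d \<in> K"
  shows "d = 0"
proof (rule ccontr)
  assume "d \<noteq> 0"
  have "v - d \<noteq> v + d"
  proof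
    assume "v - d = v + d"
    then have "2 *\<^sub>R d = 0" by (simp add: scaleR_2 algebra_simps)
    with \<open>d \<noteq> 0\<close> show False by simp
  qed
  moreover have "midpoint (v - d) (v + d) = v" by (simp add: midpoint_eq_iff)
  ultimately have "v \<in> open_segment (v - d) (v + d)"
    using midpoint_in_open_segment[of "v - d" "v + d"] by simp
  then show False using assms by (auto simp: extreme_point_of_def)
qed

lemma closure_region_cube_ball:
  fixes a :: "real^'n::finite"
  assumes arch: "arch_ok layer E" and vK: "v \<in> closure (region layer E A \<theta> \<inter> cube a s)"
  defines "L \<equiv> lin_preact layer E (active_set A) \<theta>"
  obtains \<rho> where "\<rho> > 0"
    and "\<And>y z. y \<in> ball v \<rho> \<Longrightarrow> L z v \<noteq> \<theta> (B z) \<Longrightarrow> sgn (L z y - \<theta> (B z)) = A z"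
    and "\<And>y i. y \<in> ball v \<rho> \<Longrightarrow> v $ i \<noteq> a $ i \<Longrightarrow> v $ i \<noteq> a $ i + s \<Longrightarrow> a $ i < y $ i \<and> y $ i < a $ i + s"
proof -
  let ?Z = "{z. L z v = \<theta> (B z)}"
  let ?Bd = "{i. v $ i = a $ i \<or> v $ i = a $ i + s}"
  have sign_v: "sgn (L z v - \<theta> (B z)) = A z" and "A z \<noteq> 0" if "z \<notin> ?Z" for z
    using sgn_lin_preact_closure[OF arch vK, of z] that by (auto simp: L_def sgn_real_def split: if_splits)
  define U where "U = (\<Inter>z\<in>-?Z. {y. sgn (L z y - \<theta> (B z)) = A z})
      \<inter> (\<Inter>i\<in>-?Bd. {y. a $ i < y $ i} \<inter> {y. y $ i < a $ i + s})"
  have open_sgn: "open {y. sgn (L z y - \<theta> (B z)) = A z}" if "z \<notin> ?Z" for z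
    using open_sgn_eq[of "\<lambda>y. L z y - \<theta> (B z)"] \<open>z \<notin> ?Z \<Longrightarrow> A z \<noteq> 0\<close> that
    by (simp add: L_def continuous_on_diff continuous_on_lin_preact)
  have open_coord: "open ({y::real^'n. a $ i < y $ i} \<inter> {y. y $ i < a $ i + s})" for i
    by (intro open_Int open_Collect_less continuous_intros)
  have "open (\<Inter>z\<in>-?Z. {y. sgn (L z y - \<theta> (B z)) = A z})"
    using open_sgn by (intro open_INT) auto
  moreover have "open (\<Inter>i\<in>-?Bd. {y. a $ i < y $ i} \<inter> {y. y $ i < a $ i + s})"
    using open_coord by (intro open_INT) auto
  ultimately have "open U" by (simp add: U_def open_Int)
  moreover have "v \<in> U"
  proof -
    have "v \<in> cube a s" using vK closure_region_cube_subset by blast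
    have "a $ i < v $ i \<and> v $ i < a $ i + s" if "i \<notin> ?Bd" for i
    proof -
      have "a $ i \<le> v $ i" "v $ i \<le> a $ i + s" using \<open>v \<in> cube a s\<close> by (auto simp: cube_def)
      moreover have "v $ i \<noteq> a $ i" "v $ i \<noteq> a $ i + s" using that by auto
      ultimately show ?thesis by auto
    qed
    then show ?thesis using sign_v by (simp add: U_def)
  qed
  ultimately obtain \<rho> where "\<rho> > 0" and "ball v \<rho> \<subseteq> U"
    by (meson open_contains_ball)
  then show thesis by (intro that) (auto simp: U_def)
qed

text \<open>A nonzero direction along the flat could be followed both ways without leaving the
  closure.\<close>
lemma lin_flat_at_extreme_point:
  fixes a :: "real^'n::finite"
  assumes arch: "arch_ok layer E"
    and ext: "v extreme_point_of closure (region layer E A \<theta> \<inter> cube a s)"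
  defines "L \<equiv> lin_preact layer E (active_set A) \<theta>"
  shows "lin_flat layer E (active_set A) \<theta> {z. L z v = \<theta> (B z)} {i. v $ i = a $ i \<or> v $ i = a $ i + s}
      (face_coord a s (\<lambda>i. v $ i = a $ i + s)) = {v}" (is "?F = {v}")
proof -
  let ?R = "region layer E A \<theta> \<inter> cube a s"
  have vK: "v \<in> closure ?R" using ext by (simp add: extreme_point_of_def)
  have vF: "v \<in> ?F" by (auto simp: lin_flat_def L_def face_coord_def)
  obtain \<rho> where "\<rho> > 0"
    and signs: "\<And>y z. y \<in> ball v \<rho> \<Longrightarrow> L z v \<noteq> \<theta> (B z) \<Longrightarrow> sgn (L z y - \<theta> (B z)) = A z"
    and coords: "\<And>y i. y \<in> ball v \<rho> \<Longrightarrow> v $ i \<noteq> a $ i \<Longrightarrow> v $ i \<noteq> a $ i + s \<Longrightarrow>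
      a $ i < y $ i \<and> y $ i < a $ i + s"
    using closure_region_cube_ball[OF arch vK] unfolding L_def by blast
  have "w = v" if "w \<in> ?F" for w
  proof -
    define d where "d = w - v"
    have normal: "lin_normal layer E (active_set A) \<theta> z \<bullet> d = 0 \<or> L z v \<noteq> \<theta> (B z)" for z
      using \<open>w \<in> ?F\<close> vF by (auto simp: lin_flat_def lin_preact_eq_iff L_def d_def inner_diff_right)
    have coord: "d $ i = 0 \<or> v $ i \<noteq> a $ i \<and> v $ i \<noteq> a $ i + s" for i
      using \<open>w \<in> ?F\<close> vF by (auto simp: lin_flat_def d_def)
    have shift: "v + t *\<^sub>R d \<in> closure ?R" if "\<bar>t\<bar> * norm d < \<rho> / 2" for t
    proof (intro translate_mem_closure[OF vK] image_subsetI)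
      fix u assume u: "u \<in> ball v (\<rho> / 2) \<inter> ?R"
      have near: "u + t *\<^sub>R d \<in> ball v \<rho>"
        using u that dist_triangle[of v "u + t *\<^sub>R d" u] by (simp add: dist_norm)
      have "lin_normal layer E (active_set A) \<theta> z \<bullet> (t *\<^sub>R d) = 0 \<or>
          sgn (L z (u + t *\<^sub>R d) - \<theta> (B z)) = A z" for z
        using normal[of z] signs[OF near, of z] by auto
      moreover have "(t *\<^sub>R d) $ i = 0 \<or> a $ i < (u + t *\<^sub>R d) $ i \<and> (u + t *\<^sub>R d) $ i < a $ i + s" for i
        using coord[of i] coords[OF near, of i] by auto
      ultimately have "u + t *\<^sub>R d \<in> ?R"
        using region_cube_translate[OF arch] u unfolding L_def by blast
      then show "t *\<^sub>R d + u \<in> ?R" by (simp add: add.commute)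
    qed (use \<open>\<rho> > 0\<close> in simp)
    define c where "c = norm d + 1"
    define \<epsilon> where "\<epsilon> = \<rho> / 4 / c"
    have "c > 0" by (simp add: c_def add_nonneg_pos)
    then have "\<epsilon> > 0" using \<open>\<rho> > 0\<close> by (simp add: \<epsilon>_def)
    then have "\<epsilon> * norm d < \<epsilon> * c" by (simp add: c_def)
    also have "\<dots> = \<rho> / 4" using \<open>c > 0\<close> by (simp add: \<epsilon>_def)
    finally have "\<epsilon> * norm d < \<rho> / 2" using \<open>\<rho> > 0\<close> by simp
    then have "v + \<epsilon> *\<^sub>R d \<in> closure ?R" and "v - \<epsilon> *\<^sub>R d \<in> closure ?R"
      using shift[of \<epsilon>] shift[of "- \<epsilon>"] \<open>\<epsilon> > 0\<close> by simp_all
    then have "\<epsilon> *\<^sub>R d = 0" by (rule extreme_point_symmetric_eq_0[OF ext])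
    with \<open>\<epsilon> > 0\<close> show "w = v" by (simp add: d_def)
  qed
  with vF show ?thesis by blast
qed

text \<open>Only finitely many flats are involved, as the pinned coordinates come from the faces of the
  cube; this is what makes genericity an almost sure property.\<close>
definition generic :: "('a::finite \<Rightarrow> nat) \<Rightarrow> ('a \<Rightarrow> 'a \<Rightarrow> bool) \<Rightarrow> real^'n::finite \<Rightarrow> real
    \<Rightarrow> (('a, 'n) param \<Rightarrow> real) \<Rightarrow> bool" where
  "generic layer E a s \<theta> \<longleftrightarrow> (\<forall>P T S up. lin_flat layer E P \<theta> T S (face_coord a s up) \<noteq> {} \<longrightarrow>
     aff_dim (lin_flat layer E P \<theta> T S (face_coord a s up)) \<le> int CARD('n) - int (card T) - int (card S))"

lemma generic_lin_flat_singleton: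
  fixes a :: "real^'n::finite"
  assumes "generic layer E a s \<theta>" and x: "x \<in> lin_flat layer E P \<theta> T S (face_coord a s up)"
    and "card T + card S = CARD('n)"
  shows "lin_flat layer E P \<theta> T S (face_coord a s up) = {x}"
proof -
  let ?F = "lin_flat layer E P \<theta> T S (face_coord a s up)"
  have "aff_dim ?F \<le> 0" using assms unfolding generic_def by force
  moreover have "\<not> aff_dim ?F < 0" using x aff_dim_negative_iff[of ?F] by blast
  ultimately obtain y where "?F = {y}" using aff_dim_eq_0[of ?F] by auto
  with x show ?thesis by simp
qed

definition zero_set :: "('a::finite \<Rightarrow> nat) \<Rightarrow> ('a \<Rightarrow> 'a \<Rightarrow> bool) \<Rightarrow> (('a, 'n::finite) param \<Rightarrow> real)
    \<Rightarrow> real^'n \<Rightarrow> 'a set" where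
  "zero_set layer E \<theta> x = {z. preact layer E \<theta> z x = \<theta> (B z)}"

lemma finite_vertices:
  fixes a :: "real^'n::finite"
  assumes arch: "arch_ok layer E" and gen: "generic layer E a s \<theta>"
  shows "finite (Xset layer E \<theta> k \<inter> skeleton a s k)"
proof (rule finite_subset)
  show "Xset layer E \<theta> k \<inter> skeleton a s k \<subseteq>
      (\<lambda>(P, T, S, up). THE x. lin_flat layer E P \<theta> T S (face_coord a s up) = {x}) ` UNIV"
  proof
    fix x assume x: "x \<in> Xset layer E \<theta> k \<inter> skeleton a s k"
    then obtain S up where S: "card S + k = CARD('n)" and face: "x \<in> cube_face a s S up"
      by (auto simp: skeleton_def)
    let ?P = "{z. \<theta> (B z) < preact layer E \<theta> z x}"
    have "lin_preact layer E ?P \<theta> z x = preact layer E \<theta> z x" for z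
      by (rule preact_eq_lin_preact_active[OF arch, symmetric])
    then have "x \<in> lin_flat layer E ?P \<theta> (zero_set layer E \<theta> x) S (face_coord a s up)"
      using face
      by (auto simp: lin_flat_def zero_set_def cube_face_def face_coord_def)
    moreover have "card (zero_set layer E \<theta> x) = k" using x by (simp add: Xset_def zero_set_def)
    ultimately have "lin_flat layer E ?P \<theta> (zero_set layer E \<theta> x) S (face_coord a s up) = {x}"
      using generic_lin_flat_singleton[OF gen] S by simp
    then show "x \<in> (\<lambda>(P, T, S, up). THE x. lin_flat layer E P \<theta> T S (face_coord a s up) = {x}) ` UNIV"
      by (intro image_eqI[of _ _ "(?P, zero_set layer E \<theta> x, S, up)"]) auto
  qed
qed simp

lemma region_vertex:
  fixes a :: "real^'n::finite"
  assumes arch: "arch_ok layer E" and gen: "generic layer E a s \<theta>"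
    and meets: "region layer E A \<theta> \<inter> cube a s \<noteq> {}"
  obtains v where
    "v \<in> Xset layer E \<theta> (card (zero_set layer E \<theta> v)) \<inter> skeleton a s (card (zero_set layer E \<theta> v))"
    and "{z. A z = 0} \<subseteq> zero_set layer E \<theta> v"
    and "\<And>z. z \<notin> zero_set layer E \<theta> v \<Longrightarrow> A z = sgn (preact layer E \<theta> z v - \<theta> (B z))"
proof -
  let ?K = "closure (region layer E A \<theta> \<inter> cube a s)"
  let ?L = "lin_preact layer E (active_set A) \<theta>"
  have "compact ?K"
    by (simp add: cube_eq_cbox bounded_Int bounded_cbox compact_closure)
  moreover have "convex ?K"
    by (simp add: cube_eq_cbox convex_closure convex_Int convex_region[OF arch] convex_box)
  ultimately obtain v where ext: "v extreme_point_of ?K"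
    using meets by (metis closure_eq_empty extreme_point_exists_convex)
  then have vK: "v \<in> ?K" by (simp add: extreme_point_of_def)
  define Z where "Z = zero_set layer E \<theta> v"
  define Bd where "Bd = {i. v $ i = a $ i \<or> v $ i = a $ i + s}"
  define up where "up = (\<lambda>i. v $ i = a $ i + s)"
  have Z_eq: "Z = {z. ?L z v = \<theta> (B z)}"
    using preact_eq_lin_preact_closure[OF arch vK] by (simp add: Z_def zero_set_def)
  have flat: "lin_flat layer E (active_set A) \<theta> Z Bd (face_coord a s up) = {v}"
    unfolding Z_eq Bd_def up_def by (rule lin_flat_at_extreme_point[OF arch ext])
  then have "aff_dim (lin_flat layer E (active_set A) \<theta> Z Bd (face_coord a s up)) = 0" by simp
  then have "card Z + card Bd = CARD('n)"
    using gen aff_dim_lin_flat_ge[of layer E "active_set A" \<theta> Z Bd "face_coord a s up"] flat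
    unfolding generic_def by fastforce
  moreover have "v \<in> cube_face a s Bd up"
  proof -
    have "v \<in> cube a s" using vK closure_region_cube_subset by blast
    then show ?thesis by (auto simp: cube_face_def Bd_def up_def)
  qed
  ultimately have "v \<in> Xset layer E \<theta> (card Z) \<inter> skeleton a s (card Z)"
    unfolding skeleton_def by (auto simp: Xset_def Z_def zero_set_def add.commute)
  moreover have "{z. A z = 0} \<subseteq> Z"
  proof
    fix z assume "z \<in> {z. A z = 0}"
    then show "z \<in> Z"
      using sgn_lin_preact_closure[OF arch vK, of z] by (auto simp: Z_eq sgn_real_def split: if_splits)
  qed
  moreover have "A z = sgn (preact layer E \<theta> z v - \<theta> (B z))" if "z \<notin> Z" for z
    using sgn_lin_preact_closure[OF arch vK, of z] preact_eq_lin_preact_closure[OF arch vK, of z] that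
    by (simp add: Z_eq)
  ultimately show thesis using that by (simp add: Z_def)
qed

section \<open>Counting regions\<close>

lemma card_Sigma_subsets_Pow:
  assumes "finite K"
  shows "card (SIGMA Z:{Z. Z \<subseteq> K \<and> card Z = r}. Pow (K - Z)) = (card K choose r) * 2 ^ (card K - r)"
proof -
  have "finite {Z. Z \<subseteq> K \<and> card Z = r}" using assms by simp
  then have "card (SIGMA Z:{Z. Z \<subseteq> K \<and> card Z = r}. Pow (K - Z)) =
      (\<Sum>Z \<in> {Z. Z \<subseteq> K \<and> card Z = r}. card (Pow (K - Z)))"
    using assms by (intro card_SigmaI) auto
  also have "\<dots> = (\<Sum>Z \<in> {Z. Z \<subseteq> K \<and> card Z = r}. 2 ^ (card K - r))"
    using assms by (intro sum.cong) (auto simp: card_Pow card_Diff_subset finite_subset)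
  also have "\<dots> = (card K choose r) * 2 ^ (card K - r)" by (simp add: n_subsets[OF assms])
  finally show ?thesis .
qed

lemma card_le_sum_fibres:
  assumes "finite U" and "f ` A \<subseteq> U" and "\<And>v. v \<in> U \<Longrightarrow> card {a \<in> A. f a = v} \<le> g v"
  shows "card A \<le> (\<Sum>v\<in>U. g v)"
proof -
  have "A = (\<Union>v\<in>U. {a \<in> A. f a = v})" using assms(2) by auto
  then have "card A \<le> (\<Sum>v\<in>U. card {a \<in> A. f a = v})" using card_UN_le[OF assms(1)] by metis
  also have "\<dots> \<le> (\<Sum>v\<in>U. g v)" using assms(3) by (rule sum_mono)
  finally show ?thesis .
qed

text \<open>A sign pattern with r zeros, all inside Z, and prescribed values off Z is determined by its
  zero set and its positive set inside Z.\<close>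
lemma card_sign_patterns_le:
  fixes Pats :: "('a \<Rightarrow> real) set"
  assumes "finite Z"
    and "\<And>A. A \<in> Pats \<Longrightarrow> (\<forall>z. A z \<in> {-1, 0, 1}) \<and> card {z. A z = 0} = r \<and> {z. A z = 0} \<subseteq> Z
      \<and> (\<forall>z. z \<notin> Z \<longrightarrow> A z = \<sigma> z)"
  shows "card Pats \<le> (card Z choose r) * 2 ^ (card Z - r)"
proof -
  let ?code = "\<lambda>A. ({z. A z = 0}, {z \<in> Z. A z = 1})"
  have "inj_on ?code Pats"
  proof (rule inj_onI)
    fix A A' assume A: "A \<in> Pats" and A': "A' \<in> Pats" and code: "?code A = ?code A'"
    show "A = A'"
    proof
      fix z
      show "A z = A' z"
      proof (cases "z \<in> Z")
        case True
        then have "A z = 0 \<longleftrightarrow> A' z = 0" "A z = 1 \<longleftrightarrow> A' z = 1" using code by blast+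
        then show ?thesis using assms(2)[OF A] assms(2)[OF A'] by (metis insertE singletonD)
      next
        case False
        then show ?thesis using assms(2)[OF A] assms(2)[OF A'] by simp
      qed
    qed
  qed
  moreover have "?code ` Pats \<subseteq> (SIGMA Z0:{Z0. Z0 \<subseteq> Z \<and> card Z0 = r}. Pow (Z - Z0))"
    using assms(2) by auto
  ultimately have "card Pats \<le> card (SIGMA Z0:{Z0. Z0 \<subseteq> Z \<and> card Z0 = r}. Pow (Z - Z0))"
    using assms(1) by (intro card_inj_on_le) auto
  then show ?thesis by (simp add: card_Sigma_subsets_Pow[OF assms(1)])
qed

text \<open>Each pattern is charged to a vertex of its region inside the cube; the patterns charged to a
  vertex v are counted by card_sign_patterns_le with Z the zero set of v.\<close>
lemma card_patterns_meeting_cube_le: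
  fixes a :: "real^'n::finite" and \<theta> :: "('a::finite, 'n) param \<Rightarrow> real"
  assumes arch: "arch_ok layer E" and gen: "generic layer E a s \<theta>"
  defines "V \<equiv> \<lambda>k. Xset layer E \<theta> k \<inter> skeleton a s k"
  shows "card {A. partial_pattern r A \<and> region layer E A \<theta> \<inter> cube a s \<noteq> {}}
    \<le> (\<Sum>k = r..CARD('n). (k choose r) * 2 ^ (k - r) * card (V k))"
proof -
  define Pats where "Pats = {A. partial_pattern r A \<and> region layer E A \<theta> \<inter> cube a s \<noteq> {}}"
  let ?Z = "zero_set layer E \<theta>"
  define good where "good A v \<longleftrightarrow> v \<in> V (card (?Z v)) \<and> {z. A z = 0} \<subseteq> ?Z v
      \<and> (\<forall>z. z \<notin> ?Z v \<longrightarrow> A z = sgn (preact layer E \<theta> z v - \<theta> (B z)))" for A v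
  define vertex where "vertex A = (SOME v. good A v)" for A
  have good_vertex: "good A (vertex A)" if "A \<in> Pats" for A
  proof -
    have "region layer E A \<theta> \<inter> cube a s \<noteq> {}" using that by (simp add: Pats_def)
    then obtain v where "v \<in> Xset layer E \<theta> (card (?Z v)) \<inter> skeleton a s (card (?Z v))"
      "{z. A z = 0} \<subseteq> ?Z v" "\<And>z. z \<notin> ?Z v \<Longrightarrow> A z = sgn (preact layer E \<theta> z v - \<theta> (B z))"
      using region_vertex[OF arch gen] by blast
    then have "good A v" by (simp add: good_def V_def)
    then show ?thesis unfolding vertex_def by (rule someI)
  qed
  have card_Z: "card (?Z v) = k" if "v \<in> V k" for v k
    using that by (simp add: V_def Xset_def zero_set_def)
  define U where "U = (\<Union>k\<in>{r..CARD('n)}. V k)"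
  have finite_V: "finite (V k)" for k unfolding V_def by (rule finite_vertices[OF arch gen])
  have vertex_U: "vertex A \<in> U" if "A \<in> Pats" for A
  proof -
    let ?k = "card (?Z (vertex A))"
    have "r \<le> ?k"
      using good_vertex[OF that] that card_mono[of "?Z (vertex A)" "{z. A z = 0}"]
      by (auto simp: good_def Pats_def partial_pattern_def)
    moreover have "?k \<le> CARD('n)"
      using good_vertex[OF that] by (auto simp: good_def V_def skeleton_def)
    ultimately show ?thesis using good_vertex[OF that] by (auto simp: U_def good_def)
  qed
  have "card Pats \<le> (\<Sum>v\<in>U. (card (?Z v) choose r) * 2 ^ (card (?Z v) - r))"
  proof (rule card_le_sum_fibres)
    show "finite U" using finite_V by (simp add: U_def)
    show "vertex ` Pats \<subseteq> U" using vertex_U by blast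
    fix v
    show "card {A \<in> Pats. vertex A = v} \<le> (card (?Z v) choose r) * 2 ^ (card (?Z v) - r)"
      by (rule card_sign_patterns_le[where \<sigma> = "\<lambda>z. sgn (preact layer E \<theta> z v - \<theta> (B z))"])
        (use good_vertex in \<open>auto simp: Pats_def partial_pattern_def good_def\<close>)
  qed
  also have "\<dots> = (\<Sum>k = r..CARD('n). \<Sum>v\<in>V k. (card (?Z v) choose r) * 2 ^ (card (?Z v) - r))"
    unfolding U_def
  proof (rule sum.UNION_disjoint)
    show "\<forall>k\<in>{r..CARD('n)}. \<forall>k'\<in>{r..CARD('n)}. k \<noteq> k' \<longrightarrow> V k \<inter> V k' = {}"
      by (auto simp: V_def Xset_def)
  qed (simp_all add: finite_V)
  also have "\<dots> = (\<Sum>k = r..CARD('n). (k choose r) * 2 ^ (k - r) * card (V k))"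
    by (intro sum.cong) (simp_all add: card_Z)
  finally show ?thesis by (simp add: Pats_def)
qed

lemma ecard_eq_card: "finite X \<Longrightarrow> ecard X = of_nat (card X)"
  by (simp add: ecard_def of_nat_eq_enat)

lemma finite_sign_patterns: "finite {A :: 'a::finite \<Rightarrow> real. \<forall>z. A z \<in> {-1, 0, 1}}"
proof -
  have "{A :: 'a \<Rightarrow> real. \<forall>z. A z \<in> {-1, 0, 1}} = Pi\<^sub>E UNIV (\<lambda>_. {-1, 0, 1})"
    by (auto simp: PiE_UNIV_domain)
  then show ?thesis by (simp add: finite_PiE)
qed

lemma region_count_le_if_generic:
  fixes a :: "real^'n::finite" and \<theta> :: "('a::finite, 'n) param \<Rightarrow> real"
  assumes arch: "arch_ok layer E" and gen: "generic layer E a s \<theta>"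
  shows "(\<forall>k \<le> CARD('n). \<forall>x \<in> Xset layer E \<theta> k \<inter> skeleton a s k.
         \<not> x islimpt (Xset layer E \<theta> k \<inter> skeleton a s k))
   \<and> ecard {region layer E A \<theta> | A. partial_pattern r A \<and> region layer E A \<theta> \<inter> cube a s \<noteq> {}}
       \<le> (\<Sum>k = r..CARD('n). of_nat ((k choose r) * 2 ^ (k - r)) * ecard (Xset layer E \<theta> k \<inter> skeleton a s k))"
proof
  have finite_V: "finite (Xset layer E \<theta> k \<inter> skeleton a s k)" for k
    by (rule finite_vertices[OF arch gen])
  then show "\<forall>k \<le> CARD('n). \<forall>x \<in> Xset layer E \<theta> k \<inter> skeleton a s k.
      \<not> x islimpt (Xset layer E \<theta> k \<inter> skeleton a s k)"
    using islimpt_finite by blast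
  define Pats where "Pats = {A. partial_pattern r A \<and> region layer E A \<theta> \<inter> cube a s \<noteq> {}}"
  have "finite Pats"
    by (rule finite_subset[OF _ finite_sign_patterns]) (auto simp: Pats_def partial_pattern_def)
  have "{region layer E A \<theta> | A. partial_pattern r A \<and> region layer E A \<theta> \<inter> cube a s \<noteq> {}} =
      (\<lambda>A. region layer E A \<theta>) ` Pats"
    by (auto simp: Pats_def)
  also have "ecard \<dots> \<le> of_nat (card Pats)"
    using \<open>finite Pats\<close> card_image_le[of Pats] by (simp add: ecard_eq_card of_nat_eq_enat)
  also have "\<dots> \<le> of_nat (\<Sum>k = r..CARD('n). (k choose r) * 2 ^ (k - r) * card (Xset layer E \<theta> k \<inter> skeleton a s k))"
    unfolding Pats_def of_nat_le_iff by (rule card_patterns_meeting_cube_le[OF arch gen])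
  also have "\<dots> = (\<Sum>k = r..CARD('n). of_nat ((k choose r) * 2 ^ (k - r)) * ecard (Xset layer E \<theta> k \<inter> skeleton a s k))"
    by (simp add: of_nat_sum ecard_eq_card[OF finite_V])
  finally show "ecard {region layer E A \<theta> | A. partial_pattern r A \<and> region layer E A \<theta> \<inter> cube a s \<noteq> {}}
       \<le> (\<Sum>k = r..CARD('n). of_nat ((k choose r) * 2 ^ (k - r)) * ecard (Xset layer E \<theta> k \<inter> skeleton a s k))" .
qed

section \<open>Genericity holds almost surely\<close>

lemma ex_zero_iff_dense_approx:
  fixes f :: "'b::euclidean_space \<Rightarrow> real"
  assumes cont: "continuous_on UNIV f" and dense: "\<And>X. open X \<Longrightarrow> X \<noteq> {} \<Longrightarrow> \<exists>d\<in>D. d \<in> X"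
  shows "(\<exists>x. f x = 0) \<longleftrightarrow> (\<exists>m::nat. \<forall>j::nat. \<exists>q \<in> D \<inter> cball 0 (real m + 1). \<bar>f q\<bar> < 1 / real (Suc j))"
proof
  assume "\<exists>x. f x = 0"
  then obtain x where "f x = 0" by blast
  obtain m :: nat where m: "norm x \<le> real m" using real_arch_simple by blast
  have "\<exists>q \<in> D \<inter> cball 0 (real m + 1). \<bar>f q\<bar> < 1 / real (Suc j)" for j
  proof -
    obtain \<delta> where "\<delta> > 0" and \<delta>: "\<And>y. dist y x < \<delta> \<Longrightarrow> dist (f y) (f x) < 1 / real (Suc j)"
      using cont unfolding continuous_on_iff by (metis UNIV_I of_nat_0_less_iff zero_less_Suc zero_less_divide_1_iff)
    have "ball x (min \<delta> 1) \<noteq> {}" using \<open>\<delta> > 0\<close> by simp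
    then obtain q where "q \<in> D" and q: "q \<in> ball x (min \<delta> 1)"
      using dense[OF open_ball] by blast
    have "norm q \<le> real m + 1"
      using q m norm_triangle_ineq2[of q x] by (auto simp: dist_norm norm_minus_commute)
    moreover have "\<bar>f q\<bar> < 1 / real (Suc j)"
      using \<delta>[of q] q \<open>f x = 0\<close> by (simp add: dist_commute dist_real_def)
    ultimately show ?thesis using \<open>q \<in> D\<close> by auto
  qed
  then show "\<exists>m::nat. \<forall>j::nat. \<exists>q \<in> D \<inter> cball 0 (real m + 1). \<bar>f q\<bar> < 1 / real (Suc j)" by blast
next
  assume "\<exists>m::nat. \<forall>j::nat. \<exists>q \<in> D \<inter> cball 0 (real m + 1). \<bar>f q\<bar> < 1 / real (Suc j)"
  then obtain m :: nat where m: "\<And>j::nat. \<exists>q \<in> cball 0 (real m + 1). \<bar>f q\<bar> < 1 / real (Suc j)"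
    by blast
  obtain x where "x \<in> cball 0 (real m + 1)" and min: "\<And>y. y \<in> cball 0 (real m + 1) \<Longrightarrow> \<bar>f x\<bar> \<le> \<bar>f y\<bar>"
    using continuous_attains_inf[of "cball 0 (real m + 1)" "\<lambda>y. \<bar>f y\<bar>"]
      continuous_on_subset[OF cont] by (force intro: continuous_on_rabs)
  have small: "\<bar>f x\<bar> < 1 / real (Suc j)" for j
    using m[of j] min by (meson le_less_trans)
  have "f x = 0"
  proof (rule ccontr)
    assume "f x \<noteq> 0"
    then have "0 < \<bar>f x\<bar>" by simp
    then obtain j where "inverse (real (Suc j)) < \<bar>f x\<bar>" using reals_Archimedean by blast
    with small[of j] show False by (simp add: inverse_eq_divide)
  qed
  then show "\<exists>x. f x = 0" by blast
qed

lemma sets_ex_zero: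
  fixes H :: "'p \<Rightarrow> 'b::euclidean_space \<Rightarrow> real"
  assumes meas: "\<And>x. (\<lambda>\<theta>. H \<theta> x) \<in> borel_measurable M" and cont: "\<And>\<theta>. continuous_on UNIV (H \<theta>)"
  shows "{\<theta> \<in> space M. \<exists>x. H \<theta> x = 0} \<in> sets M"
proof -
  obtain D :: "'b set" where "countable D" and D_dense: "\<And>X. open X \<Longrightarrow> X \<noteq> {} \<Longrightarrow> \<exists>d\<in>D. d \<in> X"
    by (rule countable_dense_setE) blast
  have "{\<theta> \<in> space M. \<exists>x. H \<theta> x = 0} =
      (\<Union>m::nat. \<Inter>j::nat. \<Union>q \<in> D \<inter> cball 0 (real m + 1). {\<theta> \<in> space M. \<bar>H \<theta> q\<bar> < 1 / real (Suc j)})"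
  proof (rule set_eqI)
    fix \<theta>
    have iff: "(\<exists>x. H \<theta> x = 0) \<longleftrightarrow> (\<exists>m::nat. \<forall>j::nat. \<exists>q \<in> D \<inter> cball 0 (real m + 1). \<bar>H \<theta> q\<bar> < 1 / real (Suc j))"
      by (rule ex_zero_iff_dense_approx[OF cont D_dense])
    have "\<theta> \<in> (\<Union>m::nat. \<Inter>j::nat. \<Union>q \<in> D \<inter> cball 0 (real m + 1).
          {\<theta> \<in> space M. \<bar>H \<theta> q\<bar> < 1 / real (Suc j)}) \<longleftrightarrow>
        \<theta> \<in> space M \<and> (\<exists>m::nat. \<forall>j::nat. \<exists>q \<in> D \<inter> cball 0 (real m + 1). \<bar>H \<theta> q\<bar> < 1 / real (Suc j))"
      by (simp add: Bex_def)
    then show "\<theta> \<in> {\<theta> \<in> space M. \<exists>x. H \<theta> x = 0} \<longleftrightarrow> \<theta> \<in> (\<Union>m::nat. \<Inter>j::nat.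
        \<Union>q \<in> D \<inter> cball 0 (real m + 1). {\<theta> \<in> space M. \<bar>H \<theta> q\<bar> < 1 / real (Suc j)})"
      using iff by (simp only: mem_Collect_eq)
  qed
  moreover have "{\<theta> \<in> space M. \<bar>H \<theta> q\<bar> < c} \<in> sets M" for q c
    using meas[of q] by measurable
  then have "(\<Union>q \<in> D \<inter> cball 0 (real m + 1). {\<theta> \<in> space M. \<bar>H \<theta> q\<bar> < 1 / real (Suc j)}) \<in> sets M"
    for m j using \<open>countable D\<close> by (intro sets.countable_UN'') auto
  ultimately show ?thesis by auto
qed

lemma borel_measurable_PiM_eval: "(\<lambda>\<theta>. \<theta> p) \<in> borel_measurable (PiM I (\<lambda>_. lborel))"
proof (cases "p \<in> I")
  case True
  then show ?thesis using measurable_component_singleton[OF True, of "\<lambda>_. lborel"] by simp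
next
  case False
  have "\<theta> p = undefined" if "\<theta> \<in> space (PiM I (\<lambda>_. lborel))" for \<theta>
    using that False by (auto simp: space_PiM PiE_def extensional_def)
  then show ?thesis by (subst measurable_cong[where g="\<lambda>_. undefined"]) auto
qed

lemma borel_measurable_lin_pa: "(\<lambda>\<theta>. lin_pa k E P \<theta> z x) \<in> borel_measurable (PiM I (\<lambda>_. lborel))"
proof (induction k arbitrary: z)
  case 0
  show ?case
    by (simp, intro borel_measurable_sum borel_measurable_times borel_measurable_PiM_eval borel_measurable_const)
next
  case (Suc k)
  have "(\<lambda>\<theta>. if z' \<in> P then \<theta> (W z z') * (lin_pa k E P \<theta> z' x - \<theta> (B z')) else 0)
      \<in> borel_measurable (PiM I (\<lambda>_. lborel))" for z'
    by (cases "z' \<in> P")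
      (simp_all, intro borel_measurable_times borel_measurable_diff borel_measurable_PiM_eval Suc.IH)
  then show ?case by simp
qed

lemma borel_measurable_lin_preact:
  "(\<lambda>\<theta>. lin_preact layer E P \<theta> z x) \<in> borel_measurable (PiM I (\<lambda>_. lborel))"
  by (simp add: lin_preact_def borel_measurable_lin_pa)

lemma lin_pa_fun_upd_bias:
  assumes arch: "arch_ok layer E" and "layer z = Suc k" and "layer z \<le> layer z0"
  shows "lin_pa k E P (\<theta>(B z0 := y)) z x = lin_pa k E P \<theta> z x"
  using assms(2,3)
proof (induction k arbitrary: z)
  case 0
  then show ?case by simp
next
  case (Suc k)
  have eq: "(if z' \<in> P then (\<theta>(B z0 := y)) (W z z') *
        (lin_pa k E P (\<theta>(B z0 := y)) z' x - (\<theta>(B z0 := y)) (B z')) else 0) =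
      (if z' \<in> P then \<theta> (W z z') * (lin_pa k E P \<theta> z' x - \<theta> (B z')) else 0)"
    if "z' \<in> {z'. E z' z}" for z'
  proof -
    have "layer z' = Suc k" using arch that Suc.prems by (simp add: arch_ok_def)
    then have "lin_pa k E P (\<theta>(B z0 := y)) z' x = lin_pa k E P \<theta> z' x" and "z' \<noteq> z0"
      using Suc.IH[of z'] Suc.prems by (auto simp del: fun_upd_apply)
    then show ?thesis by simp
  qed
  show ?case unfolding lin_pa.simps by (rule sum.cong[OF refl eq])
qed

lemma lin_preact_fun_upd_bias:
  assumes "arch_ok layer E" and "layer z \<le> layer z0"
  shows "lin_preact layer E P (\<theta>(B z0 := y)) z x = lin_preact layer E P \<theta> z x"
  using lin_pa_fun_upd_bias[OF assms(1) arch_ok_layer_eq_Suc[OF assms(1)]] assms(2)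
  by (simp add: lin_preact_def)

lemma lin_flat_fun_upd_bias:
  assumes "arch_ok layer E" and "z0 \<notin> T" and "\<forall>z\<in>T. layer z \<le> layer z0"
  shows "lin_flat layer E P (\<theta>(B z0 := y)) T S c = lin_flat layer E P \<theta> T S c"
proof -
  have "lin_preact layer E P (\<theta>(B z0 := y)) z x = lin_preact layer E P \<theta> z x" if "z \<in> T" for z x
    using assms(3) that by (intro lin_preact_fun_upd_bias[OF assms(1)]) auto
  moreover have "(\<theta>(B z0 := y)) (B z) = \<theta> (B z)" if "z \<in> T" for z
    using assms(2) that by auto
  ultimately show ?thesis unfolding lin_flat_def by (metis (no_types, lifting))
qed

lemma finite_params: "finite (params layer E :: ('a::finite, 'n::finite) param set)"
proof (rule finite_subset)
  show "params layer E \<subseteq> (\<lambda>(z, i). WIn z i) ` UNIV \<union> (\<lambda>(z, z'). W z z') ` UNIV \<union> range B"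
    by (auto simp: params_def)
qed simp

text \<open>The parameters for which adding z0 to T does not lower the dimension of the nonempty flat.\<close>
definition degenerate :: "('a::finite \<Rightarrow> nat) \<Rightarrow> ('a \<Rightarrow> 'a \<Rightarrow> bool) \<Rightarrow> 'a set \<Rightarrow> 'a set
    \<Rightarrow> 'n::finite set \<Rightarrow> ('n \<Rightarrow> real) \<Rightarrow> 'a \<Rightarrow> (('a, 'n) param \<Rightarrow> real) set" where
  "degenerate layer E P T S c z0 = {\<theta> \<in> space (PiM (params layer E) (\<lambda>_. lborel)).
     lin_flat layer E P \<theta> T S c \<noteq> {} \<and>
     (\<forall>x \<in> lin_flat layer E P \<theta> T S c. lin_preact layer E P \<theta> z0 x = \<theta> (B z0))}"

lemma sets_degenerate:
  fixes S :: "'n::finite set" and layer :: "'a::finite \<Rightarrow> nat"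
  shows "degenerate layer E P T S c z0 \<in> sets (PiM (params layer E) (\<lambda>_. lborel))"
proof -
  let ?M = "PiM (params layer E) (\<lambda>_. lborel) :: (('a, 'n) param \<Rightarrow> real) measure"
  let ?F = "\<lambda>\<theta>. lin_flat layer E P \<theta> T S c"
  define F where "F (\<theta> :: ('a, 'n) param \<Rightarrow> real) (x :: real^'n) = (\<Sum>z\<in>T. \<bar>lin_preact layer E P \<theta> z x - \<theta> (B z)\<bar>) + (\<Sum>i\<in>S. \<bar>x $ i - c i\<bar>)"
    for \<theta> x
  define G where "G (\<theta> :: ('a, 'n) param \<Rightarrow> real) (x :: real^'n) = lin_preact layer E P \<theta> z0 x - \<theta> (B z0)" for \<theta> x
  define H where "H m \<theta> x = F \<theta> x + max 0 (1 / real (Suc m) - \<bar>G \<theta> x\<bar>)" for m \<theta> x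
  have F_nonneg: "0 \<le> F \<theta> x" for \<theta> x by (simp add: F_def sum_nonneg)
  have F_eq_0: "F \<theta> x = 0 \<longleftrightarrow> x \<in> ?F \<theta>" for \<theta> x
    by (simp add: F_def add_nonneg_eq_0_iff sum_nonneg sum_nonneg_eq_0_iff lin_flat_def)
  have H_eq_0: "H m \<theta> x = 0 \<longleftrightarrow> x \<in> ?F \<theta> \<and> 1 / real (Suc m) \<le> \<bar>G \<theta> x\<bar>" for m \<theta> x
    using F_nonneg[of \<theta> x] F_eq_0[of \<theta> x] by (auto simp: H_def)
  have ex_H_eq_0: "(\<exists>m x. H m \<theta> x = 0) \<longleftrightarrow> (\<exists>x \<in> ?F \<theta>. G \<theta> x \<noteq> 0)" for \<theta>
  proof -
    have "(\<exists>m. 1 / real (Suc m) \<le> \<bar>G \<theta> x\<bar>) \<longleftrightarrow> G \<theta> x \<noteq> 0" for x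
      using reals_Archimedean[of "\<bar>G \<theta> x\<bar>"] by (auto simp: inverse_eq_divide intro: less_imp_le)
    then show ?thesis by (simp add: H_eq_0) blast
  qed
  have meas_F: "(\<lambda>\<theta>. F \<theta> x) \<in> borel_measurable ?M" for x
    unfolding F_def by (intro borel_measurable_add borel_measurable_sum borel_measurable_abs
      borel_measurable_diff borel_measurable_lin_preact borel_measurable_PiM_eval borel_measurable_const)
  then have meas_H: "(\<lambda>\<theta>. H m \<theta> x) \<in> borel_measurable ?M" for m x
    unfolding H_def G_def by (intro borel_measurable_add borel_measurable_max borel_measurable_abs
      borel_measurable_diff borel_measurable_lin_preact borel_measurable_PiM_eval borel_measurable_const)
  have cont_F: "continuous_on UNIV (F \<theta>)" for \<theta>
    unfolding F_def by (intro continuous_intros continuous_on_lin_preact)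
  then have cont_H: "continuous_on UNIV (H m \<theta>)" for m \<theta>
    unfolding H_def G_def by (intro continuous_intros continuous_on_lin_preact)
  have "degenerate layer E P T S c z0 =
      {\<theta> \<in> space ?M. \<exists>x. F \<theta> x = 0} - (\<Union>m. {\<theta> \<in> space ?M. \<exists>x. H m \<theta> x = 0})"
    using ex_H_eq_0 by (auto simp: degenerate_def F_eq_0 G_def)
  moreover have "{\<theta> \<in> space ?M. \<exists>x. F \<theta> x = 0} \<in> sets ?M"
    by (rule sets_ex_zero[OF meas_F cont_F])
  ultimately show ?thesis using sets_ex_zero[OF meas_H cont_H] by auto
qed

text \<open>Neither the flat nor the affine model of z0 depends on the bias of z0, so at most one value
  of that bias makes the parameters degenerate.\<close>
lemma degenerate_fun_upd_bias_unique:
  assumes arch: "arch_ok layer E" and "z0 \<notin> T" and "\<forall>z\<in>T. layer z \<le> layer z0"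
    and "\<theta>(B z0 := y) \<in> degenerate layer E P T S c z0" and "\<theta>(B z0 := y') \<in> degenerate layer E P T S c z0"
  shows "y = y'"
proof -
  have flat: "lin_flat layer E P (\<theta>(B z0 := t)) T S c = lin_flat layer E P \<theta> T S c" for t
    by (rule lin_flat_fun_upd_bias[OF arch assms(2,3)])
  have model: "lin_preact layer E P (\<theta>(B z0 := t)) z0 x = lin_preact layer E P \<theta> z0 x" for t x
    by (rule lin_preact_fun_upd_bias[OF arch order_refl])
  obtain x where "x \<in> lin_flat layer E P \<theta> T S c"
    using assms(4) flat by (auto simp: degenerate_def)
  then show ?thesis
    using assms(4,5) flat model by (force simp: degenerate_def)
qed

lemma degenerate_null:
  fixes layer :: "'a::finite \<Rightarrow> nat" and S :: "'n::finite set"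
  assumes arch: "arch_ok layer E" and "z0 \<notin> T" and "\<forall>z\<in>T. layer z \<le> layer z0"
  shows "degenerate layer E P T S c z0 \<in> null_sets (PiM (params layer E) (\<lambda>_. lborel))"
proof -
  let ?N = "degenerate layer E P T S c z0"
  let ?I = "params layer E :: ('a, 'n) param set"
  let ?J = "?I - {B z0}"
  interpret product_sigma_finite "\<lambda>_::('a, 'n) param. lborel :: real measure"
    by unfold_locales
  have I_eq: "insert (B z0) ?J = ?I" by (auto simp: params_def)
  have N_sets: "?N \<in> sets (PiM ?I (\<lambda>_. lborel))" by (rule sets_degenerate)
  then have N_sets': "?N \<in> sets (PiM (insert (B z0) ?J) (\<lambda>_. lborel))" by (simp only: I_eq)
  have slice: "(\<integral>\<^sup>+ y. indicator ?N (\<theta>(B z0 := y)) \<partial>lborel) = 0" for \<theta>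
  proof (cases "\<exists>y0. \<theta>(B z0 := y0) \<in> ?N")
    case True
    then obtain y0 where y0: "\<theta>(B z0 := y0) \<in> ?N" by blast
    have "\<theta>(B z0 := y) \<notin> ?N" if "y \<noteq> y0" for y
      using that degenerate_fun_upd_bias_unique[OF arch assms(2,3) _ y0] by blast
    then have "AE y in lborel. indicator ?N (\<theta>(B z0 := y)) = (0::ennreal)"
      by (intro eventually_mono[OF AE_lborel_singleton[of y0]]) simp
    then show ?thesis by (simp add: nn_integral_cong_AE)
  qed simp
  have "emeasure (PiM ?I (\<lambda>_. lborel)) ?N = (\<integral>\<^sup>+ \<theta>. indicator ?N \<theta> \<partial>PiM ?I (\<lambda>_. lborel))"
    using N_sets by simp
  also have "\<dots> = (\<integral>\<^sup>+ \<theta>. indicator ?N \<theta> \<partial>PiM (insert (B z0) ?J) (\<lambda>_. lborel))"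
    by (simp only: I_eq)
  also have "\<dots> = (\<integral>\<^sup>+ \<theta>. (\<integral>\<^sup>+ y. indicator ?N (\<theta>(B z0 := y)) \<partial>lborel) \<partial>PiM ?J (\<lambda>_. lborel))"
    using finite_params by (intro product_nn_integral_insert borel_measurable_indicator N_sets') auto
  also have "\<dots> = 0" by (simp add: slice)
  finally show ?thesis using N_sets by (simp add: null_sets_def)
qed

text \<open>Induction on T, removing a neuron of maximal layer: its bias is then a free coordinate
  that the smaller flat does not see.\<close>
lemma AE_aff_dim_lin_flat_le:
  fixes layer :: "'a::finite \<Rightarrow> nat" and S :: "'n::finite set"
  assumes arch: "arch_ok layer E"
  shows "AE \<theta> in PiM (params layer E) (\<lambda>_. lborel). lin_flat layer E P \<theta> T S c \<noteq> {} \<longrightarrow>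
     aff_dim (lin_flat layer E P \<theta> T S c) \<le> int CARD('n) - int (card T) - int (card S)"
proof (induction "card T" arbitrary: T)
  case 0
  then have "T = {}" by simp
  then show ?case by (intro AE_I2) (simp add: lin_flat_def aff_dim_coordinate_flat_le)
next
  case (Suc m T)
  obtain z0 where z0: "z0 \<in> T" and top: "\<forall>z\<in>T. layer z \<le> layer z0"
    using Suc.hyps(2) Max_in[of "layer ` T"] by (metis Max_ge card_gt_0_iff finite finite_imageI
      image_iff image_is_empty zero_less_Suc)
  define T' where "T' = T - {z0}"
  have T_eq: "T = insert z0 T'" and "z0 \<notin> T'" and card_T: "card T = Suc (card T')"
    using z0 card_Suc_Diff1[OF finite z0] by (auto simp: T'_def)
  have "AE \<theta> in PiM (params layer E) (\<lambda>_. lborel). \<theta> \<notin> degenerate layer E P T' S c z0"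
    using degenerate_null[OF arch \<open>z0 \<notin> T'\<close>] top by (intro AE_not_in) (auto simp: T'_def)
  moreover have "AE \<theta> in PiM (params layer E) (\<lambda>_. lborel). lin_flat layer E P \<theta> T' S c \<noteq> {} \<longrightarrow>
      aff_dim (lin_flat layer E P \<theta> T' S c) \<le> int CARD('n) - int (card T') - int (card S)"
    using Suc.hyps(1)[of T'] Suc.hyps(2) card_T by simp
  moreover have "AE \<theta> in PiM (params layer E) (\<lambda>_. lborel). \<theta> \<in> space (PiM (params layer E) (\<lambda>_. lborel))"
    by (rule AE_space)
  ultimately show ?case
  proof (eventually_elim, intro impI)
    case (elim \<theta>)
    let ?F' = "lin_flat layer E P \<theta> T' S c"
    let ?H = "{x. lin_normal layer E P \<theta> z0 \<bullet> x = \<theta> (B z0) - lin_preact layer E P \<theta> z0 0}"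
    assume "lin_flat layer E P \<theta> T S c \<noteq> {}"
    then have F_eq: "lin_flat layer E P \<theta> T S c = ?F' \<inter> ?H" and "?F' \<inter> ?H \<noteq> {}"
      by (simp_all add: T_eq lin_flat_insert)
    have "\<not> ?F' \<subseteq> ?H"
      using elim(1,3) \<open>?F' \<inter> ?H \<noteq> {}\<close> by (auto simp: degenerate_def lin_preact_eq_iff)
    then have "aff_dim (lin_flat layer E P \<theta> T S c) = aff_dim ?F' - 1"
      unfolding F_eq using \<open>?F' \<inter> ?H \<noteq> {}\<close> by (simp add: aff_dim_affine_Int_hyperplane affine_lin_flat)
    then show "aff_dim (lin_flat layer E P \<theta> T S c) \<le> int CARD('n) - int (card T) - int (card S)"
      using elim(2) \<open>?F' \<inter> ?H \<noteq> {}\<close> card_T by auto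
  qed
qed

lemma AE_generic:
  fixes layer :: "'a::finite \<Rightarrow> nat" and a :: "real^'n::finite"
  assumes "arch_ok layer E"
  shows "AE \<theta> in PiM (params layer E) (\<lambda>_. lborel). generic layer E a s \<theta>"
proof -
  have "AE \<theta> in PiM (params layer E) (\<lambda>_. lborel). \<forall>(P, T, S, up) \<in> (UNIV :: ('a set \<times> 'a set \<times> 'n set \<times> ('n \<Rightarrow> bool)) set).
      lin_flat layer E P \<theta> T S (face_coord a s up) \<noteq> {} \<longrightarrow>
      aff_dim (lin_flat layer E P \<theta> T S (face_coord a s up)) \<le> int CARD('n) - int (card T) - int (card S)"
    by (intro AE_finite_allI) (auto simp: AE_aff_dim_lin_flat_le[OF assms])
  then show ?thesis by (rule eventually_mono) (auto simp: generic_def)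
qed

theorem mainTheorem13:
  fixes layer :: "'a::finite \<Rightarrow> nat" and E :: "'a \<Rightarrow> 'a \<Rightarrow> bool"
    and \<mu> :: "(('a, 'n::finite) param \<Rightarrow> real) measure"
    and a :: "real^'n" and s :: real and r :: nat
  assumes "arch_ok layer E"
    and "prob_space \<mu>"
    and "sets \<mu> = sets (PiM (params layer E) (\<lambda>_. lborel))"
    and "absolutely_continuous (PiM (params layer E) (\<lambda>_. lborel)) \<mu>"
    and "s > 0"
    and "r \<le> CARD('n)"
  shows "AE \<theta> in \<mu>.
     (\<forall>k \<le> CARD('n). \<forall>x \<in> Xset layer E \<theta> k \<inter> skeleton a s k.
         \<not> x islimpt (Xset layer E \<theta> k \<inter> skeleton a s k))
   \<and> ecard {region layer E A \<theta> | A. partial_pattern r A \<and> region layer E A \<theta> \<inter> cube a s \<noteq> {}}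
       \<le> (\<Sum>k = r..CARD('n). of_nat ((k choose r) * 2 ^ (k - r)) * ecard (Xset layer E \<theta> k \<inter> skeleton a s k))"
proof -
  have "AE \<theta> in \<mu>. generic layer E a s \<theta>"
    by (rule absolutely_continuous_AE[OF assms(3,4) AE_generic[OF assms(1)]])
  then show ?thesis
    by (rule eventually_mono) (rule region_count_le_if_generic[OF assms(1)])
qed

end
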